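(* Let $(X,d)$ be a complete metric space and $\{f_{\eta_k}:\eta_k\in B^{[k]},k\in\mathbb{N}\}$ a binary tree of continuous maps $X\to X$. Suppose there is a nonempty compact $C\subseteq X$ with $f_{\eta_k}(C)\subseteq C$ for all finite codes $\eta_k$, that each $f_{\eta_k}$ is Lipschitz with constant $s_{\eta_k}$, and that $\sum_{k=1}^\infty\prod_{i=1}^k s_{\tau_i\eta}<\infty$ for every $\eta\in B^{[\infty]}$. Then the set $$U_{TM}=\bigcup_{\eta\in B^{[\infty]}}\lim_{k\to\infty}f_{\tau_1\eta}\circ\cdots\circ f_{\tau_{k-1}\eta}\circ f_{\tau_k\eta}(x)\subseteq C$$ is well defined (all the limits exist) and is the same set for every $x\in C$.
   Context: $B^{[k]}=\{1,2\}^k$ is the set of binary codes $\eta_k=(i_1\ldots i_k)$ of length $k$, $B^{[\infty]}=\{1,2\}^{\mathbb{N}}$ the set of infinite codes, and $\tau_\ell\eta=(i_1\ldots i_\ell)$ the truncation of $\eta$ to its first $\ell$ symbols. A binary tree of maps assigns to each finite code $\eta_k$ a continuous map $f_{\eta_k}:X\to X$. *)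

theory Defs
  imports "HOL-Analysis.Analysis"
begin

definition fin_codes :: "nat \<Rightarrow> nat list set" where
  "fin_codes k = {xs. length xs = k \<and> set xs \<subseteq> {1,2}}"

definition inf_codes :: "(nat \<Rightarrow> nat) set" where
  "inf_codes = {\<eta>. \<forall>n. \<eta> n \<in> {1,2}}"

definition trunc :: "nat \<Rightarrow> (nat \<Rightarrow> nat) \<Rightarrow> nat list" where
  "trunc l \<eta> = map \<eta> [0..<l]"

text \<open>tree_comp f eta k = f (trunc 1 eta) o ... o f (trunc k eta)\<close>
fun tree_comp :: "(nat list \<Rightarrow> 'a \<Rightarrow> 'a) \<Rightarrow> (nat \<Rightarrow> nat) \<Rightarrow> nat \<Rightarrow> 'a \<Rightarrow> 'a" where
  "tree_comp f \<eta> 0 = id"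
| "tree_comp f \<eta> (Suc k) = tree_comp f \<eta> k \<circ> f (trunc (Suc k) \<eta>)"

end

theory Submission
  imports Defs
begin

text \<open>
  Along a fixed infinite code, the composition of the first k maps is Lipschitz with constant
  the product P k of the first k Lipschitz constants, and the hypothesis says that P is summable.
  Since every map keeps the bounded set C invariant, consecutive iterates of a point of C are at
  distance at most P k \<cdot> diam C, so the orbit is Cauchy and converges into the closed set C;
  two starting points of C have iterates at distance at most P k \<cdot> diam C, which tends to 0,
  so the limit along each code does not depend on the starting point.
\<close>

lemma dist_le_sum_of_dist_Suc_le:
  fixes a :: "nat \<Rightarrow> 'a::metric_space"
  assumes "\<And>n. dist (a n) (a (Suc n)) \<le> b n" and "m \<le> n"
  shows "dist (a m) (a n) \<le> sum b {m..<n}"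
  using \<open>m \<le> n\<close>
proof (induction n rule: dec_induct)
  case (step n)
  have "dist (a m) (a (Suc n)) \<le> dist (a m) (a n) + dist (a n) (a (Suc n))"
    by (rule dist_triangle)
  also have "\<dots> \<le> sum b {m..<n} + b n"
    using step.IH assms(1)[of n] by linarith
  finally show ?case
    using step.hyps by simp
qed simp

lemma Cauchy_if_dist_Suc_summable:
  fixes a :: "nat \<Rightarrow> 'a::metric_space"
  assumes dist_le: "\<And>n. dist (a n) (a (Suc n)) \<le> b n" and "summable b"
  shows "Cauchy a"
proof (rule metric_CauchyI)
  fix e :: real
  assume "0 < e"
  then obtain N where N: "\<And>m n. m \<ge> N \<Longrightarrow> norm (sum b {m..<n}) < e"
    using \<open>summable b\<close> unfolding summable_Cauchy by blast
  have "dist (a m) (a n) < e" if "N \<le> m" "m \<le> n" for m n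
    using dist_le_sum_of_dist_Suc_le[where a=a, OF dist_le \<open>m \<le> n\<close>] N[OF \<open>N \<le> m\<close>, of n]
    by simp
  then have "dist (a m) (a n) < e" if "N \<le> m" "N \<le> n" for m n
    using that by (metis dist_commute nle_le)
  then show "\<exists>N. \<forall>m\<ge>N. \<forall>n\<ge>N. dist (a m) (a n) < e"
    by blast
qed

lemma trunc_in_fin_codes: "\<eta> \<in> inf_codes \<Longrightarrow> trunc i \<eta> \<in> fin_codes i"
  by (auto simp: inf_codes_def fin_codes_def trunc_def)

lemma tree_comp_in:
  assumes "\<And>i. 1 \<le> i \<Longrightarrow> f (trunc i \<eta>) ` C \<subseteq> C" and "x \<in> C"
  shows "tree_comp f \<eta> k x \<in> C"
  using \<open>x \<in> C\<close>
proof (induction k arbitrary: x)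
  case (Suc k)
  then show ?case
    using assms(1)[of "Suc k"] by auto
qed simp

lemma lipschitz_on_tree_comp:
  assumes "\<And>i. 1 \<le> i \<Longrightarrow> (s (trunc i \<eta>))-lipschitz_on UNIV (f (trunc i \<eta>))"
  shows "(\<Prod>i\<in>{1..k}. s (trunc i \<eta>))-lipschitz_on UNIV (tree_comp f \<eta> k)"
proof (induction k)
  case 0
  show ?case
    using lipschitz_on_id by (simp add: id_def)
next
  case (Suc k)
  have "(s (trunc (Suc k) \<eta>))-lipschitz_on UNIV (f (trunc (Suc k) \<eta>))"
    using assms by simp
  moreover have "(\<Prod>i\<in>{1..k}. s (trunc i \<eta>))-lipschitz_on (range (f (trunc (Suc k) \<eta>)))
      (tree_comp f \<eta> k)"
    using Suc.IH by (rule lipschitz_on_subset) simp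
  ultimately show ?case
    by (auto dest: lipschitz_on_compose simp: prod.cl_ivl_Suc mult.commute)
qed

locale tree_on_bounded_set =
  fixes f :: "nat list \<Rightarrow> 'a::complete_space \<Rightarrow> 'a" and s :: "nat list \<Rightarrow> real"
    and \<eta> :: "nat \<Rightarrow> nat" and C :: "'a set"
  assumes lip: "\<And>i. 1 \<le> i \<Longrightarrow> (s (trunc i \<eta>))-lipschitz_on UNIV (f (trunc i \<eta>))"
    and inv: "\<And>i. 1 \<le> i \<Longrightarrow> f (trunc i \<eta>) ` C \<subseteq> C"
    and bounded: "bounded C"
begin

abbreviation lip_prod :: "nat \<Rightarrow> real" where
  "lip_prod k \<equiv> \<Prod>i\<in>{1..k}. s (trunc i \<eta>)"

lemma dist_tree_comp_le:
  assumes "x \<in> C" "y \<in> C"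
  shows "dist (tree_comp f \<eta> k x) (tree_comp f \<eta> k y) \<le> lip_prod k * diameter C"
proof -
  have L: "(lip_prod k)-lipschitz_on UNIV (tree_comp f \<eta> k)"
    by (rule lipschitz_on_tree_comp) (rule lip)
  have "dist (tree_comp f \<eta> k x) (tree_comp f \<eta> k y) \<le> lip_prod k * dist x y"
    using lipschitz_onD[OF L] by simp
  also have "\<dots> \<le> lip_prod k * diameter C"
    using diameter_bounded_bound[OF bounded assms] lipschitz_on_nonneg[OF L]
    by (rule mult_left_mono)
  finally show ?thesis .
qed

lemma dist_tree_comp_Suc_le:
  assumes "x \<in> C"
  shows "dist (tree_comp f \<eta> k x) (tree_comp f \<eta> (Suc k) x) \<le> lip_prod k * diameter C"
  using dist_tree_comp_le[OF assms, of "f (trunc (Suc k) \<eta>) x"] inv[of "Suc k"] assms by auto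

lemma tree_comp_convergent:
  assumes "summable lip_prod" "x \<in> C"
  shows "convergent (\<lambda>k. tree_comp f \<eta> k x)"
proof (rule Cauchy_convergent)
  show "Cauchy (\<lambda>k. tree_comp f \<eta> k x)"
    using dist_tree_comp_Suc_le[OF \<open>x \<in> C\<close>] summable_mult2[OF \<open>summable lip_prod\<close>]
    by (rule Cauchy_if_dist_Suc_summable)
qed

lemma lim_tree_comp_in:
  assumes "summable lip_prod" "closed C" "x \<in> C"
  shows "lim (\<lambda>k. tree_comp f \<eta> k x) \<in> C"
proof (rule closed_sequentially[OF \<open>closed C\<close>])
  show "tree_comp f \<eta> k x \<in> C" for k
    using tree_comp_in[where f=f and \<eta>=\<eta> and C=C, OF inv \<open>x \<in> C\<close>] .
  show "(\<lambda>k. tree_comp f \<eta> k x) \<longlonglongrightarrow> lim (\<lambda>k. tree_comp f \<eta> k x)"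
    using tree_comp_convergent[OF assms(1,3)] by (simp add: convergent_LIMSEQ_iff)
qed

lemma lim_tree_comp_eq:
  assumes "summable lip_prod" "x \<in> C" "y \<in> C"
  shows "lim (\<lambda>k. tree_comp f \<eta> k x) = lim (\<lambda>k. tree_comp f \<eta> k y)"
proof -
  have dist_lim: "(\<lambda>k. dist (tree_comp f \<eta> k x) (tree_comp f \<eta> k y))
          \<longlonglongrightarrow> dist (lim (\<lambda>k. tree_comp f \<eta> k x)) (lim (\<lambda>k. tree_comp f \<eta> k y))"
    using tree_comp_convergent assms by (intro tendsto_dist) (auto simp: convergent_LIMSEQ_iff)
  have majorant: "(\<lambda>k. lip_prod k * diameter C) \<longlonglongrightarrow> 0"
    using tendsto_mult_left_zero[OF summable_LIMSEQ_zero[OF \<open>summable lip_prod\<close>]] by simp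
  have bound: "\<forall>\<^sub>F k in sequentially.
      dist (tree_comp f \<eta> k x) (tree_comp f \<eta> k y) \<le> lip_prod k * diameter C"
    using dist_tree_comp_le[OF assms(2,3)] by simp
  have nonneg: "\<forall>\<^sub>F k in sequentially. 0 \<le> dist (tree_comp f \<eta> k x) (tree_comp f \<eta> k y)"
    by simp
  have "(\<lambda>k. dist (tree_comp f \<eta> k x) (tree_comp f \<eta> k y)) \<longlonglongrightarrow> 0"
    using tendsto_sandwich[OF nonneg bound tendsto_const majorant] .
  then have "dist (lim (\<lambda>k. tree_comp f \<eta> k x)) (lim (\<lambda>k. tree_comp f \<eta> k y)) = 0"
    using LIMSEQ_unique[OF dist_lim] by blast
  then show ?thesis
    by simp
qed

end

theorem mainTheorem2:
  fixes f :: "nat list \<Rightarrow> 'a::complete_space \<Rightarrow> 'a"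
    and s :: "nat list \<Rightarrow> real"
    and C :: "'a set"
  assumes cont: "\<And>k c. k \<ge> 1 \<Longrightarrow> c \<in> fin_codes k \<Longrightarrow> continuous_on UNIV (f c)"
    and C_cpt: "compact C" and C_ne: "C \<noteq> {}"
    and C_inv: "\<And>k c. k \<ge> 1 \<Longrightarrow> c \<in> fin_codes k \<Longrightarrow> f c ` C \<subseteq> C"
    and lip: "\<And>k c. k \<ge> 1 \<Longrightarrow> c \<in> fin_codes k \<Longrightarrow> (s c)-lipschitz_on UNIV (f c)"
    and summ: "\<And>\<eta>. \<eta> \<in> inf_codes \<Longrightarrow>
                 summable (\<lambda>k. \<Prod>i\<in>{1..Suc k}. s (trunc i \<eta>))"
  shows "(\<forall>\<eta>\<in>inf_codes. \<forall>x\<in>C. convergent (\<lambda>k. tree_comp f \<eta> k x))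
       \<and> (\<forall>x\<in>C. (\<Union>\<eta>\<in>inf_codes. {lim (\<lambda>k. tree_comp f \<eta> k x)}) \<subseteq> C)
       \<and> (\<forall>x\<in>C. \<forall>y\<in>C. (\<Union>\<eta>\<in>inf_codes. {lim (\<lambda>k. tree_comp f \<eta> k x)})
                        = (\<Union>\<eta>\<in>inf_codes. {lim (\<lambda>k. tree_comp f \<eta> k y)}))"
proof -
  have tree: "tree_on_bounded_set f s \<eta> C" if "\<eta> \<in> inf_codes" for \<eta>
    using lip C_inv trunc_in_fin_codes[OF that] compact_imp_bounded[OF C_cpt]
    by unfold_locales blast+
  have summable: "summable (\<lambda>k. \<Prod>i\<in>{1..k}. s (trunc i \<eta>))" if "\<eta> \<in> inf_codes" for \<eta>
    using summ[OF that] summable_Suc_iff by blast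
  note convergent = tree_on_bounded_set.tree_comp_convergent[OF tree summable]
  note lim_in = tree_on_bounded_set.lim_tree_comp_in[OF tree summable compact_imp_closed[OF C_cpt]]
  note lim_eq = tree_on_bounded_set.lim_tree_comp_eq[OF tree summable]
  show ?thesis
  proof (intro conjI ballI)
    show "convergent (\<lambda>k. tree_comp f \<eta> k x)" if "\<eta> \<in> inf_codes" "x \<in> C" for \<eta> x
      using convergent that by blast
    show "(\<Union>\<eta>\<in>inf_codes. {lim (\<lambda>k. tree_comp f \<eta> k x)}) \<subseteq> C" if "x \<in> C" for x
      using lim_in that by blast
    show "(\<Union>\<eta>\<in>inf_codes. {lim (\<lambda>k. tree_comp f \<eta> k x)})
        = (\<Union>\<eta>\<in>inf_codes. {lim (\<lambda>k. tree_comp f \<eta> k y)})" if "x \<in> C" "y \<in> C" for x y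
    proof (rule SUP_cong[OF refl])
      fix \<eta>
      assume "\<eta> \<in> inf_codes"
      show "{lim (\<lambda>k. tree_comp f \<eta> k x)} = {lim (\<lambda>k. tree_comp f \<eta> k y)}"
        using lim_eq[OF \<open>\<eta> \<in> inf_codes\<close> \<open>\<eta> \<in> inf_codes\<close> that] by simp
    qed
  qed
qed

end
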